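(* Let $n\ge2$, $\omega\in\mathbb{R}^n$, $k\in\mathbb{R}_{>0}^n$ satisfy (IC1) $\sum_\mu\omega_\mu=0$, (IC2) $\omega\ne0$, (IC3) $\left|\frac{\omega_1}{k_1}\right|\le\cdots\le\left|\frac{\omega_n}{k_n}\right|$. For $\sigma\in\{-1,+1\}^n$ let $f_\sigma(R)=-R+\frac1n\sum_{\mu=1}^n\sigma_\mu\sqrt{k_\mu^2R-\omega_\mu^2}$. Let $\sigma\in\{-1,+1\}^n$ and indices $\mu,\nu$ with $\sigma_\mu=+1$, $\sigma_\nu=-1$, and let $\sigma'$ agree with $\sigma$ except that $\sigma'_\mu=-1$ and $\sigma'_\nu=+1$. Suppose $$(k_\mu^2-k_\nu^2)\left(\frac{\omega_n}{k_n}\right)^2\ge\omega_\mu^2-\omega_\nu^2\quad\text{and}\quad(k_\mu^2-k_\nu^2)\left(\frac1n\sum_{\iota=1}^nk_\iota\right)^2\ge\omega_\mu^2-\omega_\nu^2.$$ If $f_\sigma$ has no positive roots, then $f_{\sigma'}$ has no positive roots.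
   Context: Square roots are nonnegative real square roots; a positive root of $f_\sigma$ is a real $R>0$ with $k_\mu^2R-\omega_\mu^2\ge0$ for all $\mu$ and $f_\sigma(R)=0$. *)

theory Defs
  imports "HOL-Analysis.Analysis"
begin

text \<open>Indices 1..n of the paper are represented by 0..<n; vectors are functions nat => real.\<close>

definition f_sig :: "nat \<Rightarrow> (nat \<Rightarrow> real) \<Rightarrow> (nat \<Rightarrow> real) \<Rightarrow> (nat \<Rightarrow> real) \<Rightarrow> real \<Rightarrow> real" where
  "f_sig n k \<omega> \<sigma> R = - R + (1 / real n) * (\<Sum>i<n. \<sigma> i * sqrt ((k i)^2 * R - (\<omega> i)^2))"

definition positive_root :: "nat \<Rightarrow> (nat \<Rightarrow> real) \<Rightarrow> (nat \<Rightarrow> real) \<Rightarrow> (nat \<Rightarrow> real) \<Rightarrow> real \<Rightarrow> bool" where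
  "positive_root n k \<omega> \<sigma> R \<longleftrightarrow> R > 0 \<and> (\<forall>i<n. (k i)^2 * R - (\<omega> i)^2 \<ge> 0) \<and> f_sig n k \<omega> \<sigma> R = 0"

end

theory Submission
  imports Defs
begin

text \<open>Let \<open>R\<close> be a positive root of \<open>f\<^sub>\<sigma>\<^sub>'\<close>. Every \<open>f\<^sub>s\<close> is negative once
  \<open>\<surd>R\<close> exceeds the mean \<open>K\<close> of the \<open>k\<^sub>i\<close>, so \<open>\<surd>R \<le> K\<close>; the domain condition gives
  \<open>(\<omega>\<^sub>n/k\<^sub>n)\<^sup>2 \<le> R\<close>. Depending on the sign of \<open>k\<^sub>\<mu>\<^sup>2 - k\<^sub>\<nu>\<^sup>2\<close>, one of the two hypotheses
  then yields \<open>k\<^sub>\<nu>\<^sup>2R - \<omega>\<^sub>\<nu>\<^sup>2 \<le> k\<^sub>\<mu>\<^sup>2R - \<omega>\<^sub>\<mu>\<^sup>2\<close>, so swapping the signs back from \<open>\<sigma>'\<close>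
  to \<open>\<sigma>\<close> does not decrease the value: \<open>f\<^sub>\<sigma>(R) \<ge> 0\<close>. As \<open>f\<^sub>\<sigma>\<close> is continuous on
  \<open>[R, \<infinity>)\<close> and eventually negative, it has a root there.\<close>

lemma sum_signed_sqrt_le:
  fixes k \<omega> s :: "nat \<Rightarrow> real"
  assumes "\<forall>i<n. k i > 0" and "\<forall>i<n. \<bar>s i\<bar> \<le> 1"
    and "\<forall>i<n. (k i)^2 * R - (\<omega> i)^2 \<ge> 0"
  shows "(\<Sum>i<n. s i * sqrt ((k i)^2 * R - (\<omega> i)^2)) \<le> (\<Sum>i<n. k i) * sqrt R"
proof -
  have "s i * sqrt ((k i)^2 * R - (\<omega> i)^2) \<le> k i * sqrt R" if i: "i < n" for i
  proof -
    have "0 \<le> sqrt ((k i)^2 * R - (\<omega> i)^2)"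
      using assms(3) i by simp
    then have "s i * sqrt ((k i)^2 * R - (\<omega> i)^2) \<le> \<bar>s i\<bar> * sqrt ((k i)^2 * R - (\<omega> i)^2)"
      by (simp add: mult_right_mono)
    also have "\<dots> \<le> sqrt ((k i)^2 * R - (\<omega> i)^2)"
      using assms(2) i \<open>0 \<le> sqrt _\<close> by (intro mult_left_le_one_le) auto
    also have "\<dots> \<le> sqrt ((k i)^2 * R)"
      by (rule real_sqrt_le_mono) simp
    also have "\<dots> = k i * sqrt R"
      using assms(1) i by (simp add: real_sqrt_mult less_imp_le)
    finally show ?thesis .
  qed
  then have "(\<Sum>i<n. s i * sqrt ((k i)^2 * R - (\<omega> i)^2)) \<le> (\<Sum>i<n. k i * sqrt R)"
    by (intro sum_mono) auto
  then show ?thesis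
    by (simp add: sum_distrib_right)
qed

lemma f_sig_neg_if_sqrt_gt_mean:
  fixes k \<omega> s :: "nat \<Rightarrow> real"
  assumes "n > 0" and "\<forall>i<n. k i > 0" and "\<forall>i<n. \<bar>s i\<bar> \<le> 1"
    and "\<forall>i<n. (k i)^2 * R - (\<omega> i)^2 \<ge> 0"
    and gt: "sqrt R > (1 / real n) * (\<Sum>i<n. k i)"
  shows "f_sig n k \<omega> s R < 0"
proof -
  let ?K = "(1 / real n) * (\<Sum>i<n. k i)"
  have "?K \<ge> 0"
    using assms(2) by (intro mult_nonneg_nonneg sum_nonneg) (auto intro: less_imp_le)
  then have "R > 0"
    using gt by (metis order.strict_trans1 real_sqrt_gt_0_iff)
  have "(1 / real n) * (\<Sum>i<n. s i * sqrt ((k i)^2 * R - (\<omega> i)^2)) \<le> ?K * sqrt R"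
    using sum_signed_sqrt_le[OF assms(2-4)] by (simp add: divide_right_mono)
  also have "\<dots> < sqrt R * sqrt R"
    using gt \<open>?K \<ge> 0\<close> by (intro mult_strict_right_mono) linarith+
  also have "\<dots> = R"
    using \<open>R > 0\<close> by simp
  finally show ?thesis
    unfolding f_sig_def by simp
qed

lemma positive_root_le_mean_squared:
  fixes k \<omega> s :: "nat \<Rightarrow> real"
  assumes "n > 0" and "\<forall>i<n. k i > 0" and "\<forall>i<n. \<bar>s i\<bar> \<le> 1"
    and root: "positive_root n k \<omega> s R"
  shows "R \<le> ((1 / real n) * (\<Sum>i<n. k i))^2"
proof -
  have "sqrt R \<le> (1 / real n) * (\<Sum>i<n. k i)"
    using f_sig_neg_if_sqrt_gt_mean[OF assms(1-3), of R \<omega>] root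
    unfolding positive_root_def by force
  then show ?thesis
    using root unfolding positive_root_def
    by (metis less_imp_le power_mono real_sqrt_ge_zero real_sqrt_pow2)
qed

lemma positive_root_above:
  fixes k \<omega> s :: "nat \<Rightarrow> real"
  assumes "n > 0" and "\<forall>i<n. k i > 0" and "\<forall>i<n. \<bar>s i\<bar> \<le> 1"
    and "R > 0" and dom: "\<forall>i<n. (k i)^2 * R - (\<omega> i)^2 \<ge> 0"
    and "f_sig n k \<omega> s R \<ge> 0"
  shows "\<exists>x\<ge>R. positive_root n k \<omega> s x"
proof -
  have dom_above: "\<forall>i<n. (k i)^2 * x - (\<omega> i)^2 \<ge> 0" if "R \<le> x" for x
    using dom mult_left_mono[OF that zero_le_power2] by (smt (verit))
  define K where "K = (1 / real n) * (\<Sum>i<n. k i)"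
  define B where "B = (sqrt R + K + 1)^2"
  have "K \<ge> 0"
    unfolding K_def using assms(2) by (intro mult_nonneg_nonneg sum_nonneg) (auto intro: less_imp_le)
  then have sqrt_B: "sqrt B = sqrt R + K + 1"
    unfolding B_def using \<open>R > 0\<close> by simp
  then have "R \<le> B"
    by (metis add_increasing2 \<open>K \<ge> 0\<close> le_add_same_cancel1 real_sqrt_le_iff zero_le_one)
  have "f_sig n k \<omega> s B < 0"
    using \<open>R > 0\<close> \<open>R \<le> B\<close> \<open>K \<ge> 0\<close> sqrt_B
    by (intro f_sig_neg_if_sqrt_gt_mean[OF assms(1-3)] dom_above) (auto simp: K_def add_pos_nonneg)
  moreover have "\<forall>x. R \<le> x \<and> x \<le> B \<longrightarrow> isCont (f_sig n k \<omega> s) x"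
    unfolding f_sig_def[abs_def] by (intro allI impI continuous_intros)
  ultimately obtain x where "R \<le> x" "f_sig n k \<omega> s x = 0"
    using IVT2[of "f_sig n k \<omega> s" B 0 R] \<open>R \<le> B\<close> assms(6) by auto
  then show ?thesis
    using \<open>R > 0\<close> dom_above unfolding positive_root_def by auto
qed

lemma f_sig_swap_le:
  fixes k \<omega> \<sigma> \<sigma>' :: "nat \<Rightarrow> real"
  assumes "\<mu> < n" and "\<nu> < n" and "\<sigma> \<mu> = 1" and "\<sigma> \<nu> = -1"
    and "\<forall>i<n. \<sigma>' i = (if i = \<mu> then -1 else if i = \<nu> then 1 else \<sigma> i)"
    and "sqrt ((k \<nu>)^2 * R - (\<omega> \<nu>)^2) \<le> sqrt ((k \<mu>)^2 * R - (\<omega> \<mu>)^2)"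
  shows "f_sig n k \<omega> \<sigma>' R \<le> f_sig n k \<omega> \<sigma> R"
proof -
  define t where "t i = sqrt ((k i)^2 * R - (\<omega> i)^2)" for i
  have "\<mu> \<noteq> \<nu>"
    using assms(3,4) by auto
  have "(\<Sum>i<n. \<sigma>' i * t i)
      = (\<Sum>i<n. \<sigma> i * t i + ((if i = \<mu> then -2 * t \<mu> else 0) + (if i = \<nu> then 2 * t \<nu> else 0)))"
    using assms(3-5) \<open>\<mu> \<noteq> \<nu>\<close> by (intro sum.cong) auto
  also have "\<dots> = (\<Sum>i<n. \<sigma> i * t i) - 2 * (t \<mu> - t \<nu>)"
    using assms(1,2) by (simp add: sum.distrib)
  finally have "(\<Sum>i<n. \<sigma>' i * t i) \<le> (\<Sum>i<n. \<sigma> i * t i)"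
    using assms(6) t_def by simp
  then show ?thesis
    unfolding f_sig_def t_def by (simp add: divide_right_mono)
qed

theorem lemma3:
  fixes n :: nat and \<omega> k \<sigma> \<sigma>' :: "nat \<Rightarrow> real" and \<mu> \<nu> :: nat
  assumes n2: "n \<ge> 2"
    and kpos: "\<forall>i<n. k i > 0"
    and IC1: "(\<Sum>i<n. \<omega> i) = 0"
    and IC2: "\<exists>i<n. \<omega> i \<noteq> 0"
    and IC3: "\<forall>i j. i \<le> j \<and> j < n \<longrightarrow> \<bar>\<omega> i / k i\<bar> \<le> \<bar>\<omega> j / k j\<bar>"
    and sig: "\<forall>i<n. \<sigma> i = 1 \<or> \<sigma> i = -1"
    and mu: "\<mu> < n" and nu: "\<nu> < n"
    and smu: "\<sigma> \<mu> = 1" and snu: "\<sigma> \<nu> = -1"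
    and sig': "\<forall>i<n. \<sigma>' i = (if i = \<mu> then -1 else if i = \<nu> then 1 else \<sigma> i)"
    and H1: "((k \<mu>)^2 - (k \<nu>)^2) * (\<omega> (n-1) / k (n-1))^2 \<ge> (\<omega> \<mu>)^2 - (\<omega> \<nu>)^2"
    and H2: "((k \<mu>)^2 - (k \<nu>)^2) * ((1 / real n) * (\<Sum>i<n. k i))^2 \<ge> (\<omega> \<mu>)^2 - (\<omega> \<nu>)^2"
    and noroot: "\<not> (\<exists>R. positive_root n k \<omega> \<sigma> R)"
  shows "\<not> (\<exists>R. positive_root n k \<omega> \<sigma>' R)"
proof
  assume "\<exists>R. positive_root n k \<omega> \<sigma>' R"
  then obtain R where root': "positive_root n k \<omega> \<sigma>' R" ..
  then have "R > 0" and dom: "\<forall>i<n. (k i)^2 * R - (\<omega> i)^2 \<ge> 0"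
    unfolding positive_root_def by auto
  have "n > 0" and signs: "\<forall>i<n. \<bar>\<sigma> i\<bar> \<le> 1" and signs': "\<forall>i<n. \<bar>\<sigma>' i\<bar> \<le> 1"
    using n2 sig sig' by auto
  have upper: "R \<le> ((1 / real n) * (\<Sum>i<n. k i))^2"
    using positive_root_le_mean_squared[OF \<open>n > 0\<close> kpos signs' root'] .
  have "(\<omega> (n-1))^2 \<le> (k (n-1))^2 * R" and "k (n-1) > 0"
    using dom kpos \<open>n > 0\<close> by auto
  then have lower: "(\<omega> (n-1) / k (n-1))^2 \<le> R"
    by (simp add: power_divide divide_le_eq mult.commute)
  have "((k \<mu>)^2 - (k \<nu>)^2) * R \<ge> (\<omega> \<mu>)^2 - (\<omega> \<nu>)^2"
  proof (cases "(k \<mu>)^2 - (k \<nu>)^2 \<ge> 0")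
    case True
    then show ?thesis
      using mult_left_mono[OF lower True] H1 by linarith
  next
    case False
    then show ?thesis
      using mult_left_mono_neg[OF upper, of "(k \<mu>)^2 - (k \<nu>)^2"] H2 by linarith
  qed
  then have "f_sig n k \<omega> \<sigma>' R \<le> f_sig n k \<omega> \<sigma> R"
    by (intro f_sig_swap_le[OF mu nu smu snu sig'] real_sqrt_le_mono) (simp add: algebra_simps)
  then have "f_sig n k \<omega> \<sigma> R \<ge> 0"
    using root' unfolding positive_root_def by simp
  then show False
    using positive_root_above[OF \<open>n > 0\<close> kpos signs \<open>R > 0\<close> dom] noroot by blast
qed

end
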